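(* Index the six faces of a cube by a set $F$, and call two distinct faces adjacent if they share an edge (so each face is adjacent to exactly four faces, all except itself and the opposite face). Define the linear operator $A:\mathbb{R}^F\to\mathbb{R}^F$ by $(Ax)_f=\frac14\sum_{g \text{ adjacent to } f} x_g$. Then for every $x\in\mathbb{R}^F$, as $n\to\infty$, $A^n x$ converges to the vector all of whose entries equal $\frac16\sum_{g\in F}x_g$.
   Context: Interpretation: $x_f$ is the amount of kasha in the bowl on face $f$; each minute every dragon on a face takes one quarter of the kasha of each of its four neighboring faces, while all of its own kasha is taken, so one minute transforms $x$ into $Ax$. Amounts may be arbitrary real numbers. *)

theory Defs
  imports "HOL-Analysis.Analysis"
begin

text \<open>The six faces of a cube: a face is determined by the coordinate axis it is
  orthogonal to and by the side (sign) on which it lies.\<close>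

datatype axis = AX | AY | AZ

type_synonym face = "axis \<times> bool"

definition opposite :: "face \<Rightarrow> face" where
  "opposite f = (fst f, \<not> snd f)"

text \<open>Two distinct faces are adjacent iff they share an edge, i.e. iff they are
  neither equal nor opposite.\<close>
definition adjacent :: "face \<Rightarrow> face \<Rightarrow> bool" where
  "adjacent f g \<longleftrightarrow> f \<noteq> g \<and> g \<noteq> opposite f"

definition kashaA :: "(face \<Rightarrow> real) \<Rightarrow> (face \<Rightarrow> real)" where
  "kashaA x = (\<lambda>f. (1/4) * (\<Sum>g\<in>{g. adjacent f g}. x g))"

end

theory Submission
  imports Defs
begin

text \<open>The sum of all kasha is invariant, and after the first minute the configuration is
  symmetric under exchanging opposite faces. On symmetric configurations the deviation
  from the mean is multiplied by \<open>-1/2\<close> each minute, since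
  \<open>(A y) f = (6 m - 2 y f) / 4\<close> when \<open>m\<close> is the mean. Hence \<open>A\<^sup>n x\<close> approaches the mean
  geometrically.\<close>

definition face_mean :: "(face \<Rightarrow> real) \<Rightarrow> real" where
  "face_mean x = (1/6) * (\<Sum>g\<in>UNIV. x g)"

lemma UNIV_face:
  "(UNIV :: face set) = {(AX,True), (AX,False), (AY,True), (AY,False), (AZ,True), (AZ,False)}"
proof -
  have "(a, b) \<in> {(AX,True), (AX,False), (AY,True), (AY,False), (AZ,True), (AZ,False)}"
    for a :: axis and b
    by (cases a; cases b) auto
  then show ?thesis by auto
qed

lemma UNIV_axis: "(UNIV :: axis set) = {AX, AY, AZ}"
  using axis.exhaust by auto

instance axis :: finite
  by standard (simp add: UNIV_axis)

lemma kashaA_eq: "kashaA x f = ((\<Sum>g\<in>UNIV. x g) - x f - x (opposite f)) / 4"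
proof -
  have "(\<Sum>g\<in>{g. adjacent f g}. x g) = (\<Sum>g\<in>UNIV. if adjacent f g then x g else 0)"
    by (simp add: sum.If_cases)
  also have "\<dots> = (\<Sum>g\<in>UNIV. x g) - x f - x (opposite f)"
    unfolding UNIV_face
    by (cases f rule: prod.exhaust, rename_tac a b, case_tac a; case_tac b;
        simp add: adjacent_def opposite_def)
  finally show ?thesis unfolding kashaA_def by simp
qed

lemma face_mean_kashaA: "face_mean (kashaA x) = face_mean x"
  unfolding face_mean_def kashaA_eq by (simp add: UNIV_face opposite_def field_simps)

lemma face_mean_funpow_kashaA: "face_mean ((kashaA ^^ n) x) = face_mean x"
  by (induction n) (simp_all add: face_mean_kashaA)

lemma kashaA_opposite: "kashaA x (opposite f) = kashaA x f"
  unfolding kashaA_eq by (cases f) (simp add: opposite_def)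

lemma kashaA_deviation_symmetric:
  assumes "\<And>f. y (opposite f) = y f"
  shows "kashaA y f - face_mean y = - (1/2) * (y f - face_mean y)"
  unfolding kashaA_eq face_mean_def using assms by (simp add: field_simps)

lemma funpow_kashaA_deviation:
  "(kashaA ^^ Suc n) x f - face_mean x = (- 1/2) ^ n * (kashaA x f - face_mean x)"
proof (induction n arbitrary: f)
  case 0
  then show ?case by simp
next
  case (Suc n)
  let ?y = "(kashaA ^^ Suc n) x"
  have "(kashaA ^^ Suc (Suc n)) x f - face_mean x = kashaA ?y f - face_mean ?y"
    by (simp add: face_mean_kashaA face_mean_funpow_kashaA)
  also have "\<dots> = - (1/2) * (?y f - face_mean ?y)"
    by (rule kashaA_deviation_symmetric) (simp add: kashaA_opposite)
  also have "\<dots> = - (1/2) * (?y f - face_mean x)"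
    by (simp only: face_mean_funpow_kashaA)
  also have "\<dots> = (- 1/2) ^ Suc n * (kashaA x f - face_mean x)"
    using Suc.IH by simp
  finally show ?case .
qed

theorem mainTheorem1:
  fixes x :: "face \<Rightarrow> real"
  shows "(\<lambda>n. (kashaA ^^ n) x) \<longlonglongrightarrow> (\<lambda>f. (1/6) * (\<Sum>g\<in>UNIV. x g))"
proof -
  define c where "c = face_mean x"
  define G where "G = (\<lambda>t::real. \<lambda>f. c + t * (kashaA x f - c))"
  have iterate: "(kashaA ^^ Suc n) x = G ((- 1/2) ^ n)" for n
    using funpow_kashaA_deviation[of n x] unfolding G_def c_def by (auto simp: algebra_simps)
  have "continuous_on UNIV G"
    unfolding G_def by (intro continuous_on_coordinatewise_then_product continuous_intros)
  moreover have "(\<lambda>n. (- 1/2 :: real) ^ n) \<longlonglongrightarrow> 0"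
    by (rule LIMSEQ_power_zero) simp
  ultimately have "(\<lambda>n. G ((- 1/2) ^ n)) \<longlonglongrightarrow> G 0"
    by (rule continuous_on_tendsto_compose) simp_all
  then have "(\<lambda>n. (kashaA ^^ Suc n) x) \<longlonglongrightarrow> (\<lambda>f. c)"
    unfolding iterate by (simp add: G_def)
  then show ?thesis
    unfolding c_def face_mean_def by (rule LIMSEQ_imp_Suc)
qed

end
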